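(* Let \[P_e(x,y)=\frac{y(1+y^2)}{(1-y)(1-xy+y^2)(1+xy+y^2)},\qquad P_o(x,y)=\frac{xy^2}{(1-y)(1-xy+y^2)(1+xy+y^2)},\] so that $\frac{y}{(1-y)(1-xy+y^2)}=P_e(x,y)+P_o(x,y)$ with $P_e$ even and $P_o$ odd as functions of $x$. Then, as formal power series in $y$, \[P_e(x,y)=y(1+y)\sum_{n=0}^\infty U_n\!\Big(\frac x2\Big)^2y^{2n},\qquad P_o(x,y)=(1+y)\sum_{n=1}^\infty U_n\!\Big(\frac x2\Big)U_{n-1}\!\Big(\frac x2\Big)y^{2n},\] where $U_n$ denotes the Chebyshev polynomial of the second kind.
   Context: The Chebyshev polynomials of the second kind $U_n(x)$, $n\ge0$, are defined by $\frac{1}{1-2xz+z^2}=\sum_{n\ge0}U_n(x)z^n$. *)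

theory Defs
  imports "HOL-Computational_Algebra.Formal_Power_Series"
begin

definition chebU :: "nat \<Rightarrow> 'a::field \<Rightarrow> 'a" where
  "chebU n x = fps_nth (inverse (1 - fps_const (2 * x) * fps_X + fps_X ^ 2)) n"

definition P_e :: "'a::field \<Rightarrow> 'a fps" where
  "P_e x = fps_X * (1 + fps_X ^ 2) /
     ((1 - fps_X) * (1 - fps_const x * fps_X + fps_X ^ 2) * (1 + fps_const x * fps_X + fps_X ^ 2))"

definition P_o :: "'a::field \<Rightarrow> 'a fps" where
  "P_o x = fps_const x * fps_X ^ 2 /
     ((1 - fps_X) * (1 - fps_const x * fps_X + fps_X ^ 2) * (1 + fps_const x * fps_X + fps_X ^ 2))"

end

theory Submission
  imports Defs
begin

unbundle fps_syntax

text \<open>Multiplying the common denominator of P_e and P_o by 1 + y gives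
1 + c y^2 - c y^4 - y^6 with c = 1 - x^2, a polynomial in y^2 whose reversal
t^3 + c t^2 - c t - 1 is the characteristic polynomial of a linear recurrence satisfied by
both U_n(x/2)^2 and U_n(x/2) U_{n-1}(x/2).  So both sequences, placed on the even powers of y,
are quotients by that polynomial, and the numerators 1 + y^2 and x y^2 are read off from the
first three terms.\<close>

definition even_fps :: "(nat \<Rightarrow> 'a::comm_ring_1) \<Rightarrow> 'a fps" where
  "even_fps s = Abs_fps (\<lambda>k. if even k then s (k div 2) else 0)"

definition even_denominator :: "'a::comm_ring_1 \<Rightarrow> 'a fps" where
  "even_denominator c = 1 + fps_const c * fps_X ^ 2 - fps_const c * fps_X ^ 4 - fps_X ^ 6"

lemma even_fps_mult_even_denominator:
  fixes s :: "nat \<Rightarrow> 'a::comm_ring_1"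
  assumes rec: "\<And>m. s (m + 3) + c * s (m + 2) - c * s (m + 1) - s m = 0"
  shows "even_fps s * even_denominator c =
         fps_const (s 0) + fps_const (s 1 + c * s 0) * fps_X ^ 2
           + fps_const (s 2 + c * s 1 - c * s 0) * fps_X ^ 4"
    (is "?A * _ = ?R")
proof (rule fps_ext)
  fix k
  have "?A * even_denominator c =
      ?A + fps_const c * (fps_X ^ 2 * ?A) - fps_const c * (fps_X ^ 4 * ?A) - fps_X ^ 6 * ?A"
    by (simp add: even_denominator_def algebra_simps)
  then have lhs: "(?A * even_denominator c) $ k = ?A $ k + c * (if k < 2 then 0 else ?A $ (k - 2))
      - c * (if k < 4 then 0 else ?A $ (k - 4)) - (if k < 6 then 0 else ?A $ (k - 6))"
    by (simp only: fps_add_nth fps_sub_nth fps_mult_left_const_nth fps_X_power_mult_nth)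
  show "(?A * even_denominator c) $ k = ?R $ k"
  proof (cases "even k")
    case True
    then obtain m where k: "k = 2 * m" by blast
    consider "m = 0" | "m = 1" | "m = 2" | n where "m = n + 3"
      by (metis le_add_diff_inverse2 less_Suc_eq not_le numeral_3_eq_3 numeral_2_eq_2
          One_nat_def less_one)
    then show ?thesis
    proof cases
      case 4
      then show ?thesis
        unfolding lhs using rec[of n] by (simp add: k even_fps_def eq_diff_eq)
    qed (unfold lhs, simp_all add: k even_fps_def)
  next
    case False
    then show ?thesis
      unfolding lhs by (auto simp: even_fps_def)
  qed
qed

lemma chebU_0 [simp]: "chebU 0 y = 1"
  and chebU_Suc_0 [simp]: "chebU (Suc 0) y = 2 * y"
  and chebU_Suc_Suc: "chebU (Suc (Suc n)) y = 2 * y * chebU (Suc n) y - chebU n y"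
proof -
  define D :: "'a fps" where "D = 1 - fps_const (2 * y) * fps_X + fps_X ^ 2"
  define G where "G = inverse D"
  have GD: "G * D = 1"
    unfolding G_def by (rule inverse_mult_eq_1) (simp add: D_def)
  have U: "chebU n y = G $ n" for n
    by (simp add: chebU_def G_def D_def)
  have "G * D = G - fps_const (2 * y) * (fps_X * G) + fps_X ^ 2 * G"
    by (simp add: D_def algebra_simps)
  then have coeff: "(G * D) $ k = G $ k - 2 * y * (if k = 0 then 0 else G $ (k - 1))
      + (if k < 2 then 0 else G $ (k - 2))" for k
    by (simp add: fps_X_power_mult_nth del: power_Suc)
  show "chebU 0 y = 1"
    using coeff[of 0] GD U by simp
  then show "chebU (Suc 0) y = 2 * y"
    using coeff[of 1] GD U by simp
  show "chebU (Suc (Suc n)) y = 2 * y * chebU (Suc n) y - chebU n y"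
    using coeff[of "Suc (Suc n)"] GD U by (simp add: algebra_simps)
qed

lemma chebU_add_2: "chebU (n + 2) y = 2 * y * chebU (n + 1) y - chebU n y"
  and chebU_add_3:
    "chebU (n + 3) y = 2 * y * (2 * y * chebU (n + 1) y - chebU n y) - chebU (n + 1) y"
  by (simp_all add: eval_nat_numeral chebU_Suc_Suc)

lemma chebU_2: "chebU 2 y = 4 * y\<^sup>2 - 1"
  using chebU_Suc_Suc[of 0 y] by (simp add: numeral_2_eq_2 power2_eq_square)

lemma chebU_square_recurrence:
  fixes y :: "'a::field"
  shows "(chebU (n + 3) y)\<^sup>2 + (1 - 4 * y\<^sup>2) * (chebU (n + 2) y)\<^sup>2
           - (1 - 4 * y\<^sup>2) * (chebU (n + 1) y)\<^sup>2 - (chebU n y)\<^sup>2 = 0"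
  unfolding chebU_add_3 chebU_add_2 by algebra

lemma chebU_product_recurrence:
  fixes y :: "'a::field"
  defines "p \<equiv> \<lambda>m. if m = 0 then 0 else chebU m y * chebU (m - 1) y"
  shows "p (n + 3) + (1 - 4 * y\<^sup>2) * p (n + 2) - (1 - 4 * y\<^sup>2) * p (n + 1) - p n = 0"
proof -
  have p_add: "p (n + 3) = chebU (n + 3) y * chebU (n + 2) y"
    "p (n + 2) = chebU (n + 2) y * chebU (n + 1) y"
    "p (n + 1) = chebU (n + 1) y * chebU n y"
    by (simp_all add: p_def)
  \<comment> \<open>Running the recurrence backwards gives U_{-1} = 0, so no case split on n is needed.\<close>
  have p_n: "p n = chebU n y * (2 * y * chebU n y - chebU (n + 1) y)"
    by (cases n) (simp_all add: p_def chebU_Suc_Suc)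
  show ?thesis
    unfolding p_add p_n chebU_add_3 chebU_add_2 by algebra
qed

lemma even_fps_chebU_square:
  fixes y :: "'a::field"
  shows "even_fps (\<lambda>m. (chebU m y)\<^sup>2) * even_denominator (1 - 4 * y\<^sup>2) = 1 + fps_X ^ 2"
proof -
  have "(chebU 1 y)\<^sup>2 + (1 - 4 * y\<^sup>2) * 1 = 1"
    by (simp add: power2_eq_square)
  moreover have "(chebU 2 y)\<^sup>2 + (1 - 4 * y\<^sup>2) * (chebU 1 y)\<^sup>2 - (1 - 4 * y\<^sup>2) * 1 = 0"
    unfolding chebU_2 One_nat_def chebU_Suc_0 by algebra
  ultimately show ?thesis
    by (simp add: even_fps_mult_even_denominator[OF chebU_square_recurrence])
qed

lemma even_fps_chebU_product:
  fixes y :: "'a::field"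
  shows "even_fps (\<lambda>m. if m = 0 then 0 else chebU m y * chebU (m - 1) y)
           * even_denominator (1 - 4 * y\<^sup>2) = fps_const (2 * y) * fps_X ^ 2"
proof -
  have "chebU 2 y * chebU 1 y + (1 - 4 * y\<^sup>2) * (chebU 1 y * chebU 0 y)
      - (1 - 4 * y\<^sup>2) * 0 = 0"
    unfolding chebU_2 One_nat_def chebU_Suc_0 chebU_0 by algebra
  then show ?thesis
    by (simp add: even_fps_mult_even_denominator[OF chebU_product_recurrence])
qed

lemma one_plus_mult_denominator:
  fixes X C :: "'a::comm_ring_1"
  shows "(1 + X) * ((1 - X) * (1 - C * X + X ^ 2) * (1 + C * X + X ^ 2))
         = 1 + (1 - C\<^sup>2) * X ^ 2 - (1 - C\<^sup>2) * X ^ 4 - X ^ 6"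
  by (simp add: algebra_simps eval_nat_numeral)

lemma one_plus_X_times_P_denominator:
  fixes y :: "'a::comm_ring_1"
  shows "(1 + fps_X) * ((1 - fps_X) * (1 - fps_const (2 * y) * fps_X + fps_X ^ 2)
            * (1 + fps_const (2 * y) * fps_X + fps_X ^ 2)) = even_denominator (1 - 4 * y\<^sup>2)"
proof -
  have "1 - (fps_const (2 * y))\<^sup>2 = fps_const (1 - 4 * y\<^sup>2)"
    by (simp add: fps_const_power power_mult_distrib) (metis fps_const_1_eq_1 fps_const_sub)
  then show ?thesis
    unfolding one_plus_mult_denominator even_denominator_def by simp
qed

lemma fps_divide_eq_if_mult_eq:
  fixes a b d :: "'a::field fps"
  assumes "b * d = a" and "d $ 0 \<noteq> 0"
  shows "a / d = b"
proof -
  have "d \<noteq> 0"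
    using assms(2) by auto
  then show ?thesis
    using assms(1) by auto
qed

lemma P_e_chebU:
  fixes y :: "'a::field"
  shows "P_e (2 * y) = fps_X * (1 + fps_X) * even_fps (\<lambda>m. (chebU m y)\<^sup>2)"
  unfolding P_e_def
proof (rule fps_divide_eq_if_mult_eq)
  let ?D = "(1 - fps_X) * (1 - fps_const (2 * y) * fps_X + fps_X ^ 2)
              * (1 + fps_const (2 * y) * fps_X + fps_X ^ 2)"
  have "fps_X * (1 + fps_X) * even_fps (\<lambda>m. (chebU m y)\<^sup>2) * ?D
      = fps_X * (even_fps (\<lambda>m. (chebU m y)\<^sup>2) * ((1 + fps_X) * ?D))"
    by (simp only: ac_simps)
  also have "\<dots> = fps_X * (1 + fps_X ^ 2)"
    by (simp only: one_plus_X_times_P_denominator even_fps_chebU_square)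
  finally show "fps_X * (1 + fps_X) * even_fps (\<lambda>m. (chebU m y)\<^sup>2) * ?D = fps_X * (1 + fps_X ^ 2)" .
qed simp

lemma P_o_chebU:
  fixes y :: "'a::field"
  shows "P_o (2 * y) = (1 + fps_X) * even_fps (\<lambda>m. if m = 0 then 0 else chebU m y * chebU (m - 1) y)"
  unfolding P_o_def
proof (rule fps_divide_eq_if_mult_eq)
  let ?D = "(1 - fps_X) * (1 - fps_const (2 * y) * fps_X + fps_X ^ 2)
              * (1 + fps_const (2 * y) * fps_X + fps_X ^ 2)"
  let ?B = "even_fps (\<lambda>m. if m = 0 then 0 else chebU m y * chebU (m - 1) y)"
  have "(1 + fps_X) * ?B * ?D = ?B * ((1 + fps_X) * ?D)"
    by (simp only: ac_simps)
  also have "\<dots> = fps_const (2 * y) * fps_X ^ 2"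
    by (simp only: one_plus_X_times_P_denominator even_fps_chebU_product)
  finally show "(1 + fps_X) * ?B * ?D = fps_const (2 * y) * fps_X ^ 2" .
qed simp

theorem lemma2p2:
  fixes x :: "'a::field_char_0"
  shows "P_e x = fps_X * (1 + fps_X) *
           Abs_fps (\<lambda>k. if even k then (chebU (k div 2) (x / 2))\<^sup>2 else 0) \<and>
         P_o x = (1 + fps_X) *
           Abs_fps (\<lambda>k. if even k \<and> k \<ge> 2
                        then chebU (k div 2) (x / 2) * chebU (k div 2 - 1) (x / 2) else 0)"
proof -
  have x: "x = 2 * (x / 2)"
    by simp
  have "even_fps (\<lambda>m. if m = 0 then 0 else chebU m (x / 2) * chebU (m - 1) (x / 2))
      = Abs_fps (\<lambda>k. if even k \<and> k \<ge> 2
                   then chebU (k div 2) (x / 2) * chebU (k div 2 - 1) (x / 2) else 0)"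
    unfolding even_fps_def by (rule arg_cong[where f = Abs_fps]) (auto simp: fun_eq_iff)
  then show ?thesis
    using P_e_chebU[of "x / 2"] P_o_chebU[of "x / 2"] by (simp only: x[symmetric] even_fps_def)
qed

end
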